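(* Assume the setting described in the context and let $\gamma\in\mathbb R$, $\theta\in\mathbb R^{\mathfrak d}$. Then $$V(\theta-\gamma\mathcal G(\theta))-V(\theta)=\gamma^2\|\mathcal G(\theta)\|^2+\gamma^2\Big[\sum_{k=1}^L\sum_{i=1}^{\ell_k}(k-1)|\mathcal G_{\ell_k\ell_{k-1}+i+\mathbf d_{k-1}}(\theta)|^2\Big]-4\gamma L\Big[\int_{[a,b]^{\ell_0}}\big\langle\mathcal N^{L,\theta}_\infty(x)-f(x),\mathcal N^{L,\theta}_\infty(x)-f(0)\big\rangle\,\mu(dx)\Big]$$ $$\le\gamma^2L\|\mathcal G(\theta)\|^2-4\gamma L\Big[\int_{[a,b]^{\ell_0}}\big\langle\mathcal N^{L,\theta}_\infty(x)-f(x),\mathcal N^{L,\theta}_\infty(x)-f(0)\big\rangle\,\mu(dx)\Big].$$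
   Context: Setting. Let $L,\mathfrak d\in\mathbb N=\{1,2,\dots\}$, $(\ell_k)_{k\in\mathbb N_0}\subseteq\mathbb N$, $a\in\mathbb R$, $b\in(a,\infty)$, $\mathscr A\in(0,\infty)$, $\mathscr B\in(\mathscr A,\infty)$ with $\mathfrak d=\sum_{k=1}^L\ell_k(\ell_{k-1}+1)$; let $\mathbf d_k=\sum_{h=1}^k\ell_h(\ell_{h-1}+1)$ for $k\in\mathbb N_0$. For $\theta=(\theta_1,\dots,\theta_{\mathfrak d})\in\mathbb R^{\mathfrak d}$, $k\in\{1,\dots,L\}$, $i\in\{1,\dots,\ell_k\}$, $j\in\{1,\dots,\ell_{k-1}\}$ let $\mathfrak w^{k,\theta}_{i,j}=\theta_{(i-1)\ell_{k-1}+j+\mathbf d_{k-1}}$ and $\mathfrak b^{k,\theta}_i=\theta_{\ell_k\ell_{k-1}+i+\mathbf d_{k-1}}$, let $\mathfrak w^{k,\theta}=(\mathfrak w^{k,\theta}_{i,j})_{i,j}\in\mathbb R^{\ell_k\times\ell_{k-1}}$, $\mathfrak b^{k,\theta}=(\mathfrak b^{k,\theta}_1,\dots,\mathfrak b^{k,\theta}_{\ell_k})\in\mathbb R^{\ell_k}$, and $\mathcal A^\theta_k\colon\mathbb R^{\ell_{k-1}}\to\mathbb R^{\ell_k}$, $\mathcal A^\theta_k(x)=\mathfrak b^{k,\theta}+\mathfrak w^{k,\theta}x$. Let $\mathscr R_\infty(x)=\max\{x,0\}$ and let $\mathscr R_r\colon\mathbb R\to\mathbb R$, $r\in[1,\infty)$,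 satisfy for all $r\in[1,\infty)$: $\mathscr R_r\in C^1(\mathbb R,\mathbb R)$, $\mathscr R_r(x)=0$ for all $x\le\mathscr A r^{-1}$, $0\le\mathscr R_r(y)\le\max\{y,0\}$ for all $y\in\mathbb R$, $\mathscr R_r(z)=z$ for all $z\ge\mathscr B r^{-1}$; assume $\sup_{r\in[1,\infty)}\sup_{x\in\mathbb R}|(\mathscr R_r)'(x)|<\infty$. $\|\cdot\|$, $\langle\cdot,\cdot\rangle$ are the Euclidean norm and scalar product on each $\mathbb R^n$; for $r\in[1,\infty]$, $\mathfrak M_r(x_1,\dots,x_n)=(\mathscr R_r(x_1),\dots,\mathscr R_r(x_n))$. For $r\in[1,\infty]$, $\theta\in\mathbb R^{\mathfrak d}$ define $\mathcal N^{k,\theta}_r\colon\mathbb R^{\ell_0}\to\mathbb R^{\ell_k}$, $k\in\{1,\dots,L\}$, by $\mathcal N^{1,\theta}_r=\mathcal A^\theta_1$ and $\mathcal N^{k+1,\theta}_r(x)=\mathcal A^\theta_{k+1}(\mathfrak M_{r^{1/k}}(\mathcal N^{k,\theta}_r(x)))$ (with $\infty^{1/k}=\infty$). Let $\mu$ be a measure on the Borel $\sigma$-algebra of $[a,b]^{\ell_0}$ with $\mu([a,b]^{\ell_0})\in\mathbb R$, let $f=(f_1,\dots,f_{\ell_L})\colon\mathbb R^{\ell_0}\to\mathbb R^{\ell_L}$ be measurable (only its values on $[a,b]^{\ell_0}$ and the value $f(0)$ enter), and for $r\in[1,\infty]$ let $\mathcal L_r\colon\mathbb R^{\mathfrak d}\to\mathbb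 R$ be given by $\mathcal L_r(\theta)=\int_{[a,b]^{\ell_0}}\|\mathcal N^{L,\theta}_r(x)-f(x)\|^2\,\mu(dx)$ (these integrals are real numbers as part of the setting). Let $\mathcal G=(\mathcal G_1,\dots,\mathcal G_{\mathfrak d})\colon\mathbb R^{\mathfrak d}\to\mathbb R^{\mathfrak d}$ satisfy $\mathcal G(\theta)=\lim_{r\to\infty}(\nabla\mathcal L_r)(\theta)$ for every $\theta$ for which $((\nabla\mathcal L_r)(\theta))_{r\in[1,\infty)}$ is convergent as $r\to\infty$. Let $V\colon\mathbb R^{\mathfrak d}\to\mathbb R$, $V(\theta)=\big[\sum_{k=1}^L\big(k\|\mathfrak b^{k,\theta}\|^2+\sum_{i=1}^{\ell_k}\sum_{j=1}^{\ell_{k-1}}|\mathfrak w^{k,\theta}_{i,j}|^2\big)\big]-2L\langle f(0),\mathfrak b^{L,\theta}\rangle$. *)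

theory Defs
  imports "HOL-Analysis.Analysis" "HOL-Probability.Probability"
begin

text \<open>Parameter vectors theta in R^d are represented as functions nat => real, of which
only the coordinates 1..d matter.  Vectors in R^n (inputs, layer outputs) are likewise
functions nat => real of which only the coordinates 1..n matter.\<close>

definition dd :: "(nat \<Rightarrow> nat) \<Rightarrow> nat \<Rightarrow> nat" where
  "dd ls k = (\<Sum>h = 1..k. ls h * (ls (h - 1) + 1))"

definition wt :: "(nat \<Rightarrow> nat) \<Rightarrow> (nat \<Rightarrow> real) \<Rightarrow> nat \<Rightarrow> nat \<Rightarrow> nat \<Rightarrow> real" where
  "wt ls \<theta> k i j = \<theta> ((i - 1) * ls (k - 1) + j + dd ls (k - 1))"

definition bs :: "(nat \<Rightarrow> nat) \<Rightarrow> (nat \<Rightarrow> real) \<Rightarrow> nat \<Rightarrow> nat \<Rightarrow> real" where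
  "bs ls \<theta> k i = \<theta> (ls k * ls (k - 1) + i + dd ls (k - 1))"

definition aff :: "(nat \<Rightarrow> nat) \<Rightarrow> (nat \<Rightarrow> real) \<Rightarrow> nat \<Rightarrow> (nat \<Rightarrow> real) \<Rightarrow> nat \<Rightarrow> real" where
  "aff ls \<theta> k y = (\<lambda>i. bs ls \<theta> k i + (\<Sum>j = 1..ls (k - 1). wt ls \<theta> k i j * y j))"

fun netw :: "(nat \<Rightarrow> real \<Rightarrow> real) \<Rightarrow> (nat \<Rightarrow> nat) \<Rightarrow> (nat \<Rightarrow> real) \<Rightarrow> nat
    \<Rightarrow> (nat \<Rightarrow> real) \<Rightarrow> nat \<Rightarrow> real" where
  "netw act ls \<theta> 0 x = x"
| "netw act ls \<theta> (Suc 0) x = aff ls \<theta> 1 x"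
| "netw act ls \<theta> (Suc (Suc m)) x =
     aff ls \<theta> (Suc (Suc m)) (\<lambda>j. act (Suc m) (netw act ls \<theta> (Suc m) x j))"

definition act_r :: "(real \<Rightarrow> real \<Rightarrow> real) \<Rightarrow> real \<Rightarrow> nat \<Rightarrow> real \<Rightarrow> real" where
  "act_r R r k = R (r powr (1 / real k))"

definition act_inf :: "nat \<Rightarrow> real \<Rightarrow> real" where
  "act_inf k x = max x 0"

definition cube :: "nat \<Rightarrow> real \<Rightarrow> real \<Rightarrow> (nat \<Rightarrow> real) set" where
  "cube n a b = PiE {1..n} (\<lambda>_. {a..b})"

definition zvec :: "nat \<Rightarrow> nat \<Rightarrow> real" where
  "zvec n = restrict (\<lambda>_. 0) {1..n}"

definition sqerr :: "(nat \<Rightarrow> real \<Rightarrow> real) \<Rightarrow> (nat \<Rightarrow> nat) \<Rightarrow> nat \<Rightarrow> ((nat \<Rightarrow> real) \<Rightarrow> nat \<Rightarrow> real)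
    \<Rightarrow> (nat \<Rightarrow> real) \<Rightarrow> (nat \<Rightarrow> real) \<Rightarrow> real" where
  "sqerr act ls L f \<theta> x = (\<Sum>i = 1..ls L. (netw act ls \<theta> L x i - f x i)\<^sup>2)"

definition risk :: "(real \<Rightarrow> real \<Rightarrow> real) \<Rightarrow> (nat \<Rightarrow> nat) \<Rightarrow> nat \<Rightarrow> (nat \<Rightarrow> real) measure
    \<Rightarrow> ((nat \<Rightarrow> real) \<Rightarrow> nat \<Rightarrow> real) \<Rightarrow> real \<Rightarrow> (nat \<Rightarrow> real) \<Rightarrow> real" where
  "risk R ls L \<mu> f r \<theta> = integral\<^sup>L \<mu> (sqerr (act_r R r) ls L f \<theta>)"

definition grad_risk :: "(real \<Rightarrow> real \<Rightarrow> real) \<Rightarrow> (nat \<Rightarrow> nat) \<Rightarrow> nat \<Rightarrow> (nat \<Rightarrow> real) measure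
    \<Rightarrow> ((nat \<Rightarrow> real) \<Rightarrow> nat \<Rightarrow> real) \<Rightarrow> real \<Rightarrow> (nat \<Rightarrow> real) \<Rightarrow> nat \<Rightarrow> real" where
  "grad_risk R ls L \<mu> f r \<theta> i =
     (if i \<in> {1..dd ls L} then deriv (\<lambda>t. risk R ls L \<mu> f r (\<theta>(i := t))) (\<theta> i) else 0)"

definition Vfun :: "(nat \<Rightarrow> nat) \<Rightarrow> nat \<Rightarrow> (nat \<Rightarrow> real) \<Rightarrow> (nat \<Rightarrow> real) \<Rightarrow> real" where
  "Vfun ls L f0 \<theta> =
     (\<Sum>k = 1..L. real k * (\<Sum>i = 1..ls k. (bs ls \<theta> k i)\<^sup>2)
                 + (\<Sum>i = 1..ls k. \<Sum>j = 1..ls (k - 1). (wt ls \<theta> k i j)\<^sup>2))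
     - 2 * real L * (\<Sum>i = 1..ls L. f0 i * bs ls \<theta> L i)"

end

theory Submission
  imports Defs
begin

text \<open>
  \<open>V\<close> is the quadratic form \<open>\<langle>\<theta>, \<theta>\<rangle>\<^sub>w\<close> minus the linear term
  \<open>2 L \<langle>f(0), b\<^sup>L\<rangle>\<close>, where \<open>\<langle>_, _\<rangle>\<^sub>w\<close> gives the biases of layer \<open>k\<close> the
  weight \<open>k\<close> and all other parameters the weight 1. Hence
  \<open>V(\<theta> - \<gamma> G) - V(\<theta>) = \<gamma>\<^sup>2 \<langle>G, G\<rangle>\<^sub>w - 2 \<gamma> (\<langle>\<theta>, G\<rangle>\<^sub>w - L \<langle>f(0), G\<^sub>b\<^sub>L\<rangle>)\<close>,
  and \<open>\<langle>G, G\<rangle>\<^sub>w = \<parallel>G\<parallel>\<^sup>2 + \<Sum>(k - 1) |G\<^sub>b\<^sub>k|\<^sup>2 \<le> L \<parallel>G\<parallel>\<^sup>2\<close>.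

  The ReLU realisation is positively homogeneous: multiplying all weights by \<open>s > 0\<close> and the
  biases of layer \<open>k\<close> by \<open>s\<^sup>k\<close> multiplies \<open>N\<^sup>k\<close> by \<open>s\<^sup>k\<close>. Euler's identity
  \<open>\<langle>\<theta>, \<nabla>\<^sub>\<theta> N\<^sup>L(x)\<rangle>\<^sub>w = L N\<^sup>L(x)\<close>, together with
  \<open>\<partial>N\<^sup>L/\<partial>b\<^sup>L\<^sub>i = e\<^sub>i\<close>, turns the bracket into \<open>2 L \<integral>\<langle>N\<^sup>L - f, N\<^sup>L - f(0)\<rangle> d\<mu>\<close>
  as soon as \<open>G = \<integral>2 (N\<^sup>L - f) \<nabla>\<^sub>\<theta>N\<^sup>L d\<mu>\<close>. The latter holds because the smoothed
  activations agree with the ReLU, and their derivatives with its derivative, at every point for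
  large \<open>r\<close>: differentiating the smoothed risks under the integral sign and passing to the limit
  are both justified by dominated convergence, the integrands being bounded uniformly in \<open>r\<close>.
\<close>

section \<open>Layout of the parameter vector\<close>

definition bias_idx :: "(nat \<Rightarrow> nat) \<Rightarrow> nat \<Rightarrow> nat \<Rightarrow> nat" where
  "bias_idx ls k i = ls k * ls (k - 1) + i + dd ls (k - 1)"

definition weight_idx :: "(nat \<Rightarrow> nat) \<Rightarrow> nat \<Rightarrow> nat \<Rightarrow> nat \<Rightarrow> nat" where
  "weight_idx ls k i j = (i - 1) * ls (k - 1) + j + dd ls (k - 1)"

lemma bs_eq_bias_idx: "bs ls \<theta> k i = \<theta> (bias_idx ls k i)"
  by (simp add: bs_def bias_idx_def)

lemma wt_eq_weight_idx: "wt ls \<theta> k i j = \<theta> (weight_idx ls k i j)"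
  by (simp add: wt_def weight_idx_def)

lemma dd_Suc: "dd ls (Suc k) = dd ls k + ls (Suc k) * (ls k + 1)"
  by (simp add: dd_def)

lemma dd_mono: "k \<le> k' \<Longrightarrow> dd ls k \<le> dd ls k'"
  by (induction k' rule: dec_induct) (auto simp: dd_Suc)

lemma weight_idx_bounds:
  assumes "i \<in> {1..ls k}" "j \<in> {1..ls (k - 1)}"
  shows "dd ls (k - 1) < weight_idx ls k i j \<and> weight_idx ls k i j \<le> dd ls (k - 1) + ls k * ls (k - 1)"
proof -
  have "(i - 1) * ls (k - 1) + j \<le> (i - 1) * ls (k - 1) + ls (k - 1)" using assms by simp
  also have "\<dots> = i * ls (k - 1)" using assms by (cases i) auto
  also have "\<dots> \<le> ls k * ls (k - 1)" using assms by simp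
  finally show ?thesis using assms by (simp add: weight_idx_def)
qed

lemma bias_idx_bounds:
  assumes "1 \<le> k" "i \<in> {1..ls k}"
  shows "dd ls (k - 1) + ls k * ls (k - 1) < bias_idx ls k i \<and> bias_idx ls k i \<le> dd ls k"
  using assms dd_Suc[of ls "k - 1"] by (cases k) (auto simp: bias_idx_def)

lemma bias_idx_range: "1 \<le> k \<Longrightarrow> k \<le> L \<Longrightarrow> i \<in> {1..ls k} \<Longrightarrow> bias_idx ls k i \<in> {1..dd ls L}"
  using bias_idx_bounds[of k i ls] dd_mono[of k L ls] by auto

lemma weight_idx_range:
  "1 \<le> k \<Longrightarrow> k \<le> L \<Longrightarrow> i \<in> {1..ls k} \<Longrightarrow> j \<in> {1..ls (k - 1)} \<Longrightarrow> weight_idx ls k i j \<in> {1..dd ls L}"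
  using weight_idx_bounds[of i ls k j] bias_idx_bounds[of k i ls] dd_mono[of k L ls] by auto

lemma same_layer:
  assumes "1 \<le> k" "1 \<le> k'" "dd ls (k - 1) < q" "q \<le> dd ls k" "dd ls (k' - 1) < q" "q \<le> dd ls k'"
  shows "k = k'"
proof (rule ccontr)
  assume "k \<noteq> k'"
  then consider "k \<le> k' - 1" | "k' \<le> k - 1" by linarith
  then show False
    by cases (use dd_mono[of k "k' - 1" ls] dd_mono[of k' "k - 1" ls] assms in linarith)+
qed

lemma mult_add_eq_cancel:
  fixes i i' j j' n :: nat
  assumes "j \<in> {1..n}" "j' \<in> {1..n}" "i * n + j = i' * n + j'"
  shows "i = i' \<and> j = j'"
proof -
  have "\<not> i < i'" "\<not> i' < i"
    using mult_le_mono1[of "Suc i" i' n] mult_le_mono1[of "Suc i'" i n] assms by auto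
  then show ?thesis using assms by simp
qed

lemma bias_idx_eq_iff:
  assumes "1 \<le> k" "1 \<le> k'" "i \<in> {1..ls k}" "i' \<in> {1..ls k'}"
  shows "bias_idx ls k i = bias_idx ls k' i' \<longleftrightarrow> k = k' \<and> i = i'"
proof
  assume eq: "bias_idx ls k i = bias_idx ls k' i'"
  have "k = k'"
    using same_layer[of k k' ls "bias_idx ls k i"] bias_idx_bounds[of k i ls] bias_idx_bounds[of k' i' ls]
      eq assms by linarith
  then show "k = k' \<and> i = i'" using eq by (simp add: bias_idx_def)
qed auto

lemma weight_idx_neq_bias_idx:
  assumes "1 \<le> k" "1 \<le> k'" "i \<in> {1..ls k}" "j \<in> {1..ls (k - 1)}" "i' \<in> {1..ls k'}"
  shows "weight_idx ls k i j \<noteq> bias_idx ls k' i'"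
proof
  assume eq: "weight_idx ls k i j = bias_idx ls k' i'"
  have "k = k'"
    using same_layer[of k k' ls "weight_idx ls k i j"] weight_idx_bounds[of i ls k j]
      bias_idx_bounds[of k i ls] bias_idx_bounds[of k' i' ls] eq assms by linarith
  with eq assms(5) have "weight_idx ls k i j = bias_idx ls k i'" "i' \<in> {1..ls k}" by simp_all
  then show False
    using weight_idx_bounds[of i ls k j] bias_idx_bounds[of k i' ls] assms(1,3,4) by linarith
qed

lemma weight_idx_eq_iff:
  assumes "1 \<le> k" "1 \<le> k'" "i \<in> {1..ls k}" "j \<in> {1..ls (k - 1)}" "i' \<in> {1..ls k'}" "j' \<in> {1..ls (k' - 1)}"
  shows "weight_idx ls k i j = weight_idx ls k' i' j' \<longleftrightarrow> k = k' \<and> i = i' \<and> j = j'"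
proof
  assume eq: "weight_idx ls k i j = weight_idx ls k' i' j'"
  have "k = k'"
    using same_layer[of k k' ls "weight_idx ls k i j"] weight_idx_bounds[of i ls k j] weight_idx_bounds[of i' ls k' j']
      bias_idx_bounds[of k i ls] bias_idx_bounds[of k' i' ls] eq assms by linarith
  moreover from this have "i - 1 = i' - 1 \<and> j = j'"
    using mult_add_eq_cancel[of j "ls (k - 1)" j' "i - 1" "i' - 1"] eq assms by (simp add: weight_idx_def)
  ultimately show "k = k' \<and> i = i' \<and> j = j'" using assms by auto
qed auto

lemma sum_atLeastAtMost_add: "(\<Sum>p = 1..(a::nat) + b. g p) = (\<Sum>p = 1..a. g p) + (\<Sum>q = 1..b. g (a + q))"
  by (induction b) (simp_all add: sum.nat_ivl_Suc' add.assoc)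

lemma sum_row_major: "(\<Sum>q = 1..(n::nat) * m. h q) = (\<Sum>i = 1..n. \<Sum>j = 1..m. h ((i - 1) * m + j))"
proof (induction n)
  case (Suc n)
  have "(\<Sum>q = 1..Suc n * m. h q) = (\<Sum>q = 1..n * m. h q) + (\<Sum>j = 1..m. h (n * m + j))"
    using sum_atLeastAtMost_add[where a = "n * m" and b = m and g = h] by (simp add: add.commute)
  then show ?case using Suc by (simp add: sum.nat_ivl_Suc')
qed simp

lemma sum_params_by_layer:
  "(\<Sum>p = 1..dd ls L. g p) = (\<Sum>k = 1..L. (\<Sum>i = 1..ls k. \<Sum>j = 1..ls (k - 1). g (weight_idx ls k i j))
     + (\<Sum>i = 1..ls k. g (bias_idx ls k i)))"
proof (induction L)
  case 0 then show ?case by (simp add: dd_def)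
next
  case (Suc L)
  let ?n = "ls (Suc L) * ls L"
  have "dd ls (Suc L) = dd ls L + (?n + ls (Suc L))" by (simp add: dd_Suc algebra_simps)
  then have "(\<Sum>p = 1..dd ls (Suc L). g p)
      = (\<Sum>p = 1..dd ls L. g p) + (\<Sum>q = 1..?n. g (dd ls L + q)) + (\<Sum>i = 1..ls (Suc L). g (dd ls L + (?n + i)))"
    by (simp only: sum_atLeastAtMost_add add.assoc)
  also have "(\<Sum>q = 1..?n. g (dd ls L + q)) = (\<Sum>i = 1..ls (Suc L). \<Sum>j = 1..ls L. g (dd ls L + ((i - 1) * ls L + j)))"
    by (rule sum_row_major)
  finally show ?case using Suc by (simp add: weight_idx_def bias_idx_def algebra_simps)
qed

section \<open>Partial derivatives of the realisation\<close>

definition layer_input :: "(nat \<Rightarrow> real \<Rightarrow> real) \<Rightarrow> (nat \<Rightarrow> nat) \<Rightarrow> (nat \<Rightarrow> real) \<Rightarrow> nat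
    \<Rightarrow> (nat \<Rightarrow> real) \<Rightarrow> nat \<Rightarrow> real" where
  "layer_input act ls \<theta> k x = (if k = 0 then x else (\<lambda>j. act k (netw act ls \<theta> k x j)))"

lemma netw_Suc: "netw act ls \<theta> (Suc k) x = aff ls \<theta> (Suc k) (layer_input act ls \<theta> k x)"
  by (cases k) (auto simp: layer_input_def)

definition aff_pderiv :: "(nat \<Rightarrow> nat) \<Rightarrow> (nat \<Rightarrow> real) \<Rightarrow> nat \<Rightarrow> nat \<Rightarrow> (nat \<Rightarrow> real) \<Rightarrow> (nat \<Rightarrow> real)
    \<Rightarrow> nat \<Rightarrow> real" where
  "aff_pderiv ls \<theta> k p y dy = (\<lambda>i. (if p = bias_idx ls k i then 1 else 0)
      + (\<Sum>j = 1..ls (k - 1). if p = weight_idx ls k i j then y j else 0)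
      + (\<Sum>j = 1..ls (k - 1). wt ls \<theta> k i j * dy j))"

primrec netw_pderiv :: "(nat \<Rightarrow> real \<Rightarrow> real) \<Rightarrow> (nat \<Rightarrow> real \<Rightarrow> real) \<Rightarrow> (nat \<Rightarrow> nat) \<Rightarrow> (nat \<Rightarrow> real)
    \<Rightarrow> nat \<Rightarrow> nat \<Rightarrow> (nat \<Rightarrow> real) \<Rightarrow> nat \<Rightarrow> real" where
  "netw_pderiv act dact ls \<theta> p 0 x = (\<lambda>_. 0)"
| "netw_pderiv act dact ls \<theta> p (Suc k) x = aff_pderiv ls \<theta> (Suc k) p (layer_input act ls \<theta> k x)
     (\<lambda>j. dact k (netw act ls \<theta> k x j) * netw_pderiv act dact ls \<theta> p k x j)"

definition sqerr_pderiv :: "(nat \<Rightarrow> real \<Rightarrow> real) \<Rightarrow> (nat \<Rightarrow> real \<Rightarrow> real) \<Rightarrow> (nat \<Rightarrow> nat) \<Rightarrow> nat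
    \<Rightarrow> ((nat \<Rightarrow> real) \<Rightarrow> nat \<Rightarrow> real) \<Rightarrow> (nat \<Rightarrow> real) \<Rightarrow> nat \<Rightarrow> (nat \<Rightarrow> real) \<Rightarrow> real" where
  "sqerr_pderiv act dact ls L f \<theta> p x =
     (\<Sum>m = 1..ls L. 2 * (netw act ls \<theta> L x m - f x m) * netw_pderiv act dact ls \<theta> p L x m)"

lemma has_real_derivative_fun_upd:
  "((\<lambda>t. (\<theta>(p := t)) q) has_real_derivative (if p = q then 1 else 0)) (at s)"
  by (cases "p = q") (auto intro: derivative_eq_intros)

lemma has_real_derivative_aff:
  assumes "\<And>j. ((\<lambda>t. y t j) has_real_derivative dy j) (at (\<theta> p))"
  shows "((\<lambda>t. aff ls (\<theta>(p := t)) k (y t) i) has_real_derivative aff_pderiv ls \<theta> k p (y (\<theta> p)) dy i)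
           (at (\<theta> p))"
proof -
  have summand: "((\<lambda>t. (\<theta>(p := t)) (weight_idx ls k i j) * y t j) has_real_derivative
      (if p = weight_idx ls k i j then 1 else 0) * y (\<theta> p) j + \<theta> (weight_idx ls k i j) * dy j) (at (\<theta> p))" for j
    using DERIV_mult[OF has_real_derivative_fun_upd[of \<theta> p "weight_idx ls k i j"] assms[of j]]
    by (simp add: mult.commute)
  have "((\<lambda>t. \<Sum>j = 1..ls (k - 1). (\<theta>(p := t)) (weight_idx ls k i j) * y t j) has_real_derivative
      (\<Sum>j = 1..ls (k - 1). (if p = weight_idx ls k i j then 1 else 0) * y (\<theta> p) j + \<theta> (weight_idx ls k i j) * dy j))
      (at (\<theta> p))"
    by (rule DERIV_sum) (rule summand)
  moreover have "(\<Sum>j = 1..ls (k - 1). (if p = weight_idx ls k i j then 1 else 0) * y (\<theta> p) j + \<theta> (weight_idx ls k i j) * dy j)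
      = (\<Sum>j = 1..ls (k - 1). if p = weight_idx ls k i j then y (\<theta> p) j else 0) + (\<Sum>j = 1..ls (k - 1). wt ls \<theta> k i j * dy j)"
    unfolding sum.distrib[symmetric] wt_eq_weight_idx by (rule sum.cong) auto
  ultimately show ?thesis
    using DERIV_add[OF has_real_derivative_fun_upd[of \<theta> p "bias_idx ls k i"]]
    by (simp add: aff_def aff_pderiv_def bs_eq_bias_idx wt_eq_weight_idx add.assoc)
qed

lemma has_real_derivative_netw:
  assumes "\<And>k y. (act k has_real_derivative dact k y) (at y)"
  shows "((\<lambda>t. netw act ls (\<theta>(p := t)) k x m) has_real_derivative netw_pderiv act dact ls \<theta> p k x m) (at (\<theta> p))"
proof (induction k arbitrary: m)
  case (Suc k)
  have "((\<lambda>t. layer_input act ls (\<theta>(p := t)) k x j) has_real_derivative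
      dact k (netw act ls \<theta> k x j) * netw_pderiv act dact ls \<theta> p k x j) (at (\<theta> p))" for j
  proof (cases "k = 0")
    case False
    with DERIV_chain2[where f = "act k" and g = "\<lambda>t. netw act ls (\<theta>(p := t)) k x j", OF assms Suc.IH]
    show ?thesis by (simp add: layer_input_def)
  qed (simp add: layer_input_def)
  from has_real_derivative_aff[where \<theta> = \<theta> and p = p and y = "\<lambda>t. layer_input act ls (\<theta>(p := t)) k x", OF this] show ?case
    by (simp only: netw_Suc netw_pderiv.simps fun_upd_triv)
qed simp

lemma has_real_derivative_sqerr:
  assumes "\<And>k y. (act k has_real_derivative dact k y) (at y)"
  shows "((\<lambda>t. sqerr act ls L f (\<theta>(p := t)) x) has_real_derivative sqerr_pderiv act dact ls L f \<theta> p x)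
           (at (\<theta> p))"
proof -
  have "((\<lambda>t. (netw act ls (\<theta>(p := t)) L x m - f x m)\<^sup>2) has_real_derivative
      2 * (netw act ls \<theta> L x m - f x m) * netw_pderiv act dact ls \<theta> p L x m) (at (\<theta> p))" for m
    using DERIV_power[OF DERIV_diff[OF has_real_derivative_netw[OF assms, where k = L and m = m] DERIV_const[of "f x m"]], where n = 2]
    by (rule DERIV_cong) (simp add: algebra_simps)
  then show ?thesis unfolding sqerr_def sqerr_pderiv_def by (intro DERIV_sum)
qed

fun netw_bound :: "(nat \<Rightarrow> nat) \<Rightarrow> real \<Rightarrow> real \<Rightarrow> nat \<Rightarrow> real" where
  "netw_bound ls T X 0 = X"
| "netw_bound ls T X (Suc k) = T + real (ls k) * T * netw_bound ls T X k"

fun pderiv_bound :: "(nat \<Rightarrow> nat) \<Rightarrow> real \<Rightarrow> real \<Rightarrow> real \<Rightarrow> nat \<Rightarrow> real" where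
  "pderiv_bound ls T X C 0 = 0"
| "pderiv_bound ls T X C (Suc k) = 1 + real (ls k) * netw_bound ls T X k + real (ls k) * T * C * pderiv_bound ls T X C k"

lemma abs_sum_le_card_mult:
  fixes g :: "'a \<Rightarrow> real"
  assumes "\<And>j. j \<in> A \<Longrightarrow> \<bar>g j\<bar> \<le> c"
  shows "\<bar>sum g A\<bar> \<le> real (card A) * c"
  using order_trans[OF sum_abs sum_bounded_above[of A "\<lambda>j. \<bar>g j\<bar>" c]] assms by simp

lemma abs_aff_le:
  assumes "\<bar>bs ls \<theta> k i\<bar> \<le> T" "\<forall>j\<in>{1..ls (k - 1)}. \<bar>wt ls \<theta> k i j\<bar> \<le> T"
    and "\<forall>j\<in>{1..ls (k - 1)}. \<bar>y j\<bar> \<le> Y" and "0 \<le> T"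
  shows "\<bar>aff ls \<theta> k y i\<bar> \<le> T + real (ls (k - 1)) * T * Y"
proof -
  have "\<bar>\<Sum>j = 1..ls (k - 1). wt ls \<theta> k i j * y j\<bar> \<le> real (card {1..ls (k - 1)}) * (T * Y)"
    by (rule abs_sum_le_card_mult) (use assms in \<open>auto simp: abs_mult intro!: mult_mono\<close>)
  then show ?thesis
    using assms(1) abs_triangle_ineq[of "bs ls \<theta> k i"] by (simp add: aff_def mult.assoc)
qed

lemma abs_aff_pderiv_le:
  assumes "\<forall>j\<in>{1..ls (k - 1)}. \<bar>wt ls \<theta> k i j\<bar> \<le> T" and "\<forall>j\<in>{1..ls (k - 1)}. \<bar>y j\<bar> \<le> Y"
    and "\<forall>j\<in>{1..ls (k - 1)}. \<bar>dy j\<bar> \<le> D" and "0 \<le> T"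
  shows "\<bar>aff_pderiv ls \<theta> k p y dy i\<bar> \<le> 1 + real (ls (k - 1)) * Y + real (ls (k - 1)) * T * D"
proof -
  have "\<bar>if p = bias_idx ls k i then 1 else 0 :: real\<bar> \<le> 1" by simp
  moreover have "\<bar>\<Sum>j = 1..ls (k - 1). if p = weight_idx ls k i j then y j else 0\<bar> \<le> real (card {1..ls (k - 1)}) * Y"
    by (rule abs_sum_le_card_mult) (use assms in auto)
  moreover have "\<bar>\<Sum>j = 1..ls (k - 1). wt ls \<theta> k i j * dy j\<bar> \<le> real (card {1..ls (k - 1)}) * (T * D)"
    by (rule abs_sum_le_card_mult) (use assms in \<open>auto simp: abs_mult intro!: mult_mono\<close>)
  ultimately show ?thesis
    unfolding aff_pderiv_def
    by (simp only: card_atLeastAtMost diff_Suc_1 mult.assoc)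
      (intro order_trans[OF abs_triangle_ineq add_mono] order_trans[OF abs_triangle_ineq add_mono])
qed

lemma netw_bounds:
  assumes "0 \<le> T" "0 \<le> C" "k \<le> L"
    and "\<forall>q\<in>{1..dd ls L}. \<bar>\<theta> q\<bar> \<le> T" and "\<forall>j\<in>{1..ls 0}. \<bar>x j\<bar> \<le> X"
    and "\<forall>k y. \<bar>act k y\<bar> \<le> \<bar>y\<bar>" and "\<forall>k y. \<bar>dact k y\<bar> \<le> C"
  shows "\<forall>m\<in>{1..ls k}. \<bar>netw act ls \<theta> k x m\<bar> \<le> netw_bound ls T X k
           \<and> \<bar>netw_pderiv act dact ls \<theta> p k x m\<bar> \<le> pderiv_bound ls T X C k"
  using assms(3)
proof (induction k)
  case 0 then show ?case using assms(5) by simp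
next
  case (Suc k)
  then have IH: "\<forall>m\<in>{1..ls k}. \<bar>netw act ls \<theta> k x m\<bar> \<le> netw_bound ls T X k
                   \<and> \<bar>netw_pderiv act dact ls \<theta> p k x m\<bar> \<le> pderiv_bound ls T X C k" by simp
  have input: "\<forall>j\<in>{1..ls (Suc k - 1)}. \<bar>layer_input act ls \<theta> k x j\<bar> \<le> netw_bound ls T X k"
    using IH assms(6) by (auto simp: layer_input_def intro: order_trans)
  have chain: "\<forall>j\<in>{1..ls (Suc k - 1)}. \<bar>dact k (netw act ls \<theta> k x j) * netw_pderiv act dact ls \<theta> p k x j\<bar>
                 \<le> C * pderiv_bound ls T X C k"
    using IH assms(2,7) by (auto simp: abs_mult intro!: mult_mono)
  show ?case
  proof
    fix m assume m: "m \<in> {1..ls (Suc k)}"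
    have w: "\<forall>j\<in>{1..ls (Suc k - 1)}. \<bar>wt ls \<theta> (Suc k) m j\<bar> \<le> T"
      using assms(4) weight_idx_range[of "Suc k" L m ls] Suc.prems m by (auto simp: wt_eq_weight_idx)
    have b: "\<bar>bs ls \<theta> (Suc k) m\<bar> \<le> T"
      using assms(4) bias_idx_range[of "Suc k" L m ls] Suc.prems m by (auto simp: bs_eq_bias_idx)
    have "\<bar>netw act ls \<theta> (Suc k) x m\<bar> \<le> netw_bound ls T X (Suc k)"
      using abs_aff_le[OF b w input assms(1)] by (simp add: netw_Suc)
    moreover have "\<bar>netw_pderiv act dact ls \<theta> p (Suc k) x m\<bar> \<le> pderiv_bound ls T X C (Suc k)"
      using abs_aff_pderiv_le[OF w input chain assms(1)] by (simp add: mult_ac)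
    ultimately show "\<bar>netw act ls \<theta> (Suc k) x m\<bar> \<le> netw_bound ls T X (Suc k)
          \<and> \<bar>netw_pderiv act dact ls \<theta> p (Suc k) x m\<bar> \<le> pderiv_bound ls T X C (Suc k)" ..
  qed
qed

lemma abs_sqerr_pderiv_le:
  assumes "0 \<le> T" "0 \<le> C"
    and "\<forall>q\<in>{1..dd ls L}. \<bar>\<theta> q\<bar> \<le> T" and "\<forall>j\<in>{1..ls 0}. \<bar>x j\<bar> \<le> X"
    and "\<forall>k y. \<bar>act k y\<bar> \<le> \<bar>y\<bar>" and "\<forall>k y. \<bar>dact k y\<bar> \<le> C"
    and "\<forall>m\<in>{1..ls L}. \<bar>f x m\<bar> \<le> F"
  shows "\<bar>sqerr_pderiv act dact ls L f \<theta> p x\<bar>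
           \<le> real (ls L) * (2 * (netw_bound ls T X L + F) * pderiv_bound ls T X C L)"
proof -
  have bounds: "\<forall>m\<in>{1..ls L}. \<bar>netw act ls \<theta> L x m\<bar> \<le> netw_bound ls T X L
                  \<and> \<bar>netw_pderiv act dact ls \<theta> p L x m\<bar> \<le> pderiv_bound ls T X C L"
    using netw_bounds[OF assms(1,2) order.refl assms(3-6)] .
  have "\<bar>2 * (netw act ls \<theta> L x m - f x m) * netw_pderiv act dact ls \<theta> p L x m\<bar>
          \<le> 2 * (netw_bound ls T X L + F) * pderiv_bound ls T X C L" if m: "m \<in> {1..ls L}" for m
  proof -
    have "\<bar>2 * (netw act ls \<theta> L x m - f x m)\<bar> \<le> 2 * (netw_bound ls T X L + F)"
      using bounds assms(7) m by fastforce
    then show ?thesis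
      unfolding abs_mult[of "2 * _"] using bounds m by (intro mult_mono) auto
  qed
  then show ?thesis unfolding sqerr_pderiv_def using abs_sum_le_card_mult[of "{1..ls L}"] by simp
qed

section \<open>Differentiation under the integral sign\<close>

lemma tendsto_integral_at_dominated:
  fixes q :: "real \<Rightarrow> 'a \<Rightarrow> real"
  assumes "0 < \<delta>" "integrable M h" "f \<in> borel_measurable M" "\<And>s. q s \<in> borel_measurable M"
    and lim: "\<And>x. x \<in> space M \<Longrightarrow> ((\<lambda>s. q s x) \<longlongrightarrow> f x) (at t0)"
    and bound: "\<And>s x. x \<in> space M \<Longrightarrow> s \<noteq> t0 \<Longrightarrow> \<bar>s - t0\<bar> < \<delta> \<Longrightarrow> \<bar>q s x\<bar> \<le> h x"
  shows "((\<lambda>s. integral\<^sup>L M (q s)) \<longlongrightarrow> integral\<^sup>L M f) (at t0)"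
  unfolding tendsto_at_iff_sequentially comp_def
proof (intro allI impI)
  fix Y :: "nat \<Rightarrow> real" assume Y: "\<forall>n. Y n \<in> UNIV - {t0}" "Y \<longlonglongrightarrow> t0"
  define Z where "Z n = (if \<bar>Y n - t0\<bar> < \<delta> then Y n else t0 + \<delta> / 2)" for n
  have "eventually (\<lambda>n. \<bar>Y n - t0\<bar> < \<delta>) sequentially"
    using Y(2) \<open>0 < \<delta>\<close> unfolding tendsto_iff dist_real_def by auto
  then have ev: "eventually (\<lambda>n. Z n = Y n) sequentially"
    by (rule eventually_mono) (simp add: Z_def)
  have Z: "Z n \<noteq> t0" "\<bar>Z n - t0\<bar> < \<delta>" for n
    using Y(1) \<open>0 < \<delta>\<close> by (auto simp: Z_def)
  have "Z \<longlonglongrightarrow> t0"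
    using Y(2) ev by (rule Lim_transform_eventually[OF _ eventually_mono]) simp
  have "(\<lambda>n. integral\<^sup>L M (q (Z n))) \<longlonglongrightarrow> integral\<^sup>L M f"
  proof (rule integral_dominated_convergence[where w = h])
    show "AE x in M. (\<lambda>n. q (Z n) x) \<longlonglongrightarrow> f x"
      using lim Z(1) \<open>Z \<longlonglongrightarrow> t0\<close> by (intro AE_I2) (simp add: tendsto_at_iff_sequentially comp_def)
    show "AE x in M. norm (q (Z n) x) \<le> h x" for n
      using bound Z by (intro AE_I2) simp
  qed (use assms in auto)
  then show "(\<lambda>n. integral\<^sup>L M (q (Y n))) \<longlonglongrightarrow> integral\<^sup>L M f"
    using ev by (rule Lim_transform_eventually[OF _ eventually_mono]) simp
qed

lemma has_real_derivative_integral_dominated: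
  fixes g :: "real \<Rightarrow> 'a \<Rightarrow> real"
  assumes "0 < \<delta>" "integrable M h" "\<And>t. integrable M (g t)"
    and deriv: "\<And>x t. x \<in> space M \<Longrightarrow> \<bar>t - t0\<bar> < \<delta> \<Longrightarrow> ((\<lambda>s. g s x) has_real_derivative g' t x) (at t)"
    and bound: "\<And>x t. x \<in> space M \<Longrightarrow> \<bar>t - t0\<bar> < \<delta> \<Longrightarrow> \<bar>g' t x\<bar> \<le> h x"
  shows "integrable M (g' t0) \<and> ((\<lambda>t. integral\<^sup>L M (g t)) has_real_derivative integral\<^sup>L M (g' t0)) (at t0)"
proof -
  define q where "q s x = (g s x - g t0 x) / (s - t0)" for s x
  have q_meas: "q s \<in> borel_measurable M" for s
    unfolding q_def using assms(3) by measurable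
  have q_lim: "((\<lambda>s. q s x) \<longlongrightarrow> g' t0 x) (at t0)" if "x \<in> space M" for x
    using deriv[OF that, of t0] \<open>0 < \<delta>\<close> unfolding has_field_derivative_iff q_def by simp
  have q_bound: "\<bar>q s x\<bar> \<le> h x" if x: "x \<in> space M" and s: "s \<noteq> t0" "\<bar>s - t0\<bar> < \<delta>" for s x
  proof -
    have "norm (g s x - g t0 x) \<le> h x * norm (s - t0)"
      by (rule field_differentiable_bound[of "ball t0 \<delta>"])
        (use s deriv[OF x] bound[OF x] \<open>0 < \<delta>\<close> in \<open>auto simp: dist_real_def abs_minus_commute
          intro: has_field_derivative_at_within\<close>)
    then show ?thesis using s by (simp add: q_def abs_divide pos_divide_le_eq)
  qed
  define X where "X n = t0 + \<delta> * inverse (real (Suc n))" for n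
  have "X \<longlonglongrightarrow> t0"
    unfolding X_def using tendsto_add[OF tendsto_const tendsto_mult[OF tendsto_const LIMSEQ_inverse_real_of_nat]]
    by fastforce
  moreover have "X n \<noteq> t0" for n using \<open>0 < \<delta>\<close> by (simp add: X_def)
  ultimately have "g' t0 \<in> borel_measurable M"
    using q_lim by (intro borel_measurable_LIMSEQ_real[where u = "\<lambda>n. q (X n)", OF _ q_meas])
      (simp add: tendsto_at_iff_sequentially comp_def)
  moreover have "((\<lambda>t. (integral\<^sup>L M (g t) - integral\<^sup>L M (g t0)) / (t - t0)) \<longlongrightarrow> integral\<^sup>L M (g' t0)) (at t0)"
    using tendsto_integral_at_dominated[OF assms(1,2) calculation q_meas q_lim q_bound] assms(3)
    by (simp add: q_def)
  ultimately show ?thesis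
    using bound \<open>0 < \<delta>\<close>
    by (auto simp: has_field_derivative_iff
        intro!: Bochner_Integration.integrable_bound[OF assms(2)] AE_I2 order_trans[OF _ abs_ge_self])
qed

section \<open>The weighted inner product and Euler's identity\<close>

definition scaled_inner :: "(nat \<Rightarrow> nat) \<Rightarrow> nat \<Rightarrow> (nat \<Rightarrow> real) \<Rightarrow> (nat \<Rightarrow> real) \<Rightarrow> real" where
  "scaled_inner ls L \<theta> g =
     (\<Sum>k = 1..L. real k * (\<Sum>i = 1..ls k. \<theta> (bias_idx ls k i) * g (bias_idx ls k i)))
     + (\<Sum>k = 1..L. \<Sum>i = 1..ls k. \<Sum>j = 1..ls (k - 1). \<theta> (weight_idx ls k i j) * g (weight_idx ls k i j))"

lemma scaled_inner_commute: "scaled_inner ls L \<theta> g = scaled_inner ls L g \<theta>"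
  by (simp add: scaled_inner_def mult.commute)

lemma scaled_inner_add: "scaled_inner ls L \<theta> (\<lambda>p. g p + h p) = scaled_inner ls L \<theta> g + scaled_inner ls L \<theta> h"
  by (simp add: scaled_inner_def distrib_left sum.distrib)

lemma scaled_inner_mult: "scaled_inner ls L \<theta> (\<lambda>p. c * g p) = c * scaled_inner ls L \<theta> g"
  by (simp add: scaled_inner_def distrib_left sum_distrib_left mult.left_commute)

lemma scaled_inner_diff_left:
  "scaled_inner ls L (\<lambda>p. \<theta> p - c * g p) h = scaled_inner ls L \<theta> h - c * scaled_inner ls L g h"
  by (simp add: scaled_inner_def algebra_simps sum_subtractf sum.distrib sum_distrib_left)

lemma scaled_inner_sum:
  "finite J \<Longrightarrow> scaled_inner ls L \<theta> (\<lambda>p. \<Sum>j\<in>J. h j p) = (\<Sum>j\<in>J. scaled_inner ls L \<theta> (h j))"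
  by (induction J rule: finite_induct) (simp_all add: scaled_inner_add, simp add: scaled_inner_def)

lemma scaled_inner_cong:
  assumes "\<And>p. p \<in> {1..dd ls L} \<Longrightarrow> g p = h p"
  shows "scaled_inner ls L \<theta> g = scaled_inner ls L \<theta> h"
proof -
  have "g (bias_idx ls k i) = h (bias_idx ls k i)" if "k \<in> {1..L}" "i \<in> {1..ls k}" for k i
    using assms bias_idx_range[of k L i ls] that by simp
  moreover have "g (weight_idx ls k i j) = h (weight_idx ls k i j)"
    if "k \<in> {1..L}" "i \<in> {1..ls k}" "j \<in> {1..ls (k - 1)}" for k i j
    using assms weight_idx_range[of k L i ls j] that by simp
  ultimately show ?thesis
    unfolding scaled_inner_def by (intro arg_cong2[where f = "(+)"] sum.cong refl arg_cong2[where f = "(*)"]) auto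
qed

lemma scaled_inner_self:
  "scaled_inner ls L g g = (\<Sum>p = 1..dd ls L. (g p)\<^sup>2)
     + (\<Sum>k = 1..L. \<Sum>i = 1..ls k. (real k - 1) * (g (bias_idx ls k i))\<^sup>2)"
  unfolding sum_params_by_layer[of _ ls L]
  by (simp add: scaled_inner_def power2_eq_square sum.distrib algebra_simps sum_distrib_left sum_subtractf)

lemma bias_weighted_sum_le:
  "(\<Sum>k = 1..L. \<Sum>i = 1..ls k. (real k - 1) * (g (bias_idx ls k i))\<^sup>2)
     \<le> (real L - 1) * (\<Sum>p = 1..dd ls L. (g p)\<^sup>2)"
proof (cases "L = 0")
  case False
  have "(\<Sum>k = 1..L. \<Sum>i = 1..ls k. (real k - 1) * (g (bias_idx ls k i))\<^sup>2)
      \<le> (\<Sum>k = 1..L. \<Sum>i = 1..ls k. (real L - 1) * (g (bias_idx ls k i))\<^sup>2)"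
    by (intro sum_mono mult_right_mono) auto
  also have "\<dots> \<le> (real L - 1) * (\<Sum>k = 1..L. (\<Sum>i = 1..ls k. \<Sum>j = 1..ls (k - 1). (g (weight_idx ls k i j))\<^sup>2)
      + (\<Sum>i = 1..ls k. (g (bias_idx ls k i))\<^sup>2))"
    using False by (auto simp: sum_distrib_left[symmetric] intro!: mult_left_mono sum_mono sum_nonneg)
  finally show ?thesis by (simp only: sum_params_by_layer)
qed (simp add: dd_def)

lemma Vfun_eq_scaled_inner:
  "Vfun ls L c \<theta> = scaled_inner ls L \<theta> \<theta> - 2 * real L * (\<Sum>i = 1..ls L. c i * \<theta> (bias_idx ls L i))"
  by (simp add: Vfun_def scaled_inner_def bs_eq_bias_idx wt_eq_weight_idx sum.distrib power2_eq_square)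

lemma Vfun_gradient_step:
  "Vfun ls L c (\<lambda>p. \<theta> p - \<gamma> * g p) - Vfun ls L c \<theta>
     = \<gamma>\<^sup>2 * (\<Sum>p = 1..dd ls L. (g p)\<^sup>2)
       + \<gamma>\<^sup>2 * (\<Sum>k = 1..L. \<Sum>i = 1..ls k. (real k - 1) * (g (bias_idx ls k i))\<^sup>2)
       - 2 * \<gamma> * (scaled_inner ls L \<theta> g - real L * (\<Sum>i = 1..ls L. c i * g (bias_idx ls L i)))"
proof -
  have "scaled_inner ls L (\<lambda>p. \<theta> p - \<gamma> * g p) (\<lambda>p. \<theta> p - \<gamma> * g p)
      = scaled_inner ls L \<theta> \<theta> - 2 * \<gamma> * scaled_inner ls L \<theta> g + \<gamma>\<^sup>2 * scaled_inner ls L g g"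
    unfolding scaled_inner_diff_left
    by (subst (1 2) scaled_inner_commute)
      (simp add: scaled_inner_diff_left power2_eq_square algebra_simps scaled_inner_commute[of ls L g \<theta>])
  then show ?thesis
    by (simp add: Vfun_eq_scaled_inner scaled_inner_self algebra_simps sum_subtractf sum_distrib_left)
qed

lemma scaled_inner_bias_delta:
  assumes "1 \<le> k" "k \<le> L" "m \<in> {1..ls k}"
  shows "scaled_inner ls L \<theta> (\<lambda>p. if p = bias_idx ls k m then 1 else 0) = real k * \<theta> (bias_idx ls k m)"
proof -
  have "(\<Sum>i = 1..ls k'. \<theta> (bias_idx ls k' i) * (if bias_idx ls k' i = bias_idx ls k m then 1 else 0))
      = (if k' = k then \<theta> (bias_idx ls k m) else 0)" if "k' \<in> {1..L}" for k'
  proof -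
    have "(\<Sum>i = 1..ls k'. \<theta> (bias_idx ls k' i) * (if bias_idx ls k' i = bias_idx ls k m then 1 else 0))
        = (\<Sum>i = 1..ls k'. if k' = k \<and> i = m then \<theta> (bias_idx ls k m) else 0)"
      by (rule sum.cong[OF refl]) (use bias_idx_eq_iff[of k' k _ ls m] assms that in auto)
    also have "\<dots> = (if k' = k then \<theta> (bias_idx ls k m) else 0)" using assms by (cases "k' = k") auto
    finally show ?thesis .
  qed
  then have "(\<Sum>k' = 1..L. real k' * (\<Sum>i = 1..ls k'. \<theta> (bias_idx ls k' i) * (if bias_idx ls k' i = bias_idx ls k m then 1 else 0)))
      = (\<Sum>k' = 1..L. if k' = k then real k * \<theta> (bias_idx ls k m) else 0)"
    by (intro sum.cong) auto
  moreover have "(\<Sum>k' = 1..L. \<Sum>i = 1..ls k'. \<Sum>j = 1..ls (k' - 1).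
      \<theta> (weight_idx ls k' i j) * (if weight_idx ls k' i j = bias_idx ls k m then 1 else 0)) = 0"
    by (intro sum.neutral ballI) (use weight_idx_neq_bias_idx[of _ k _ ls _ m] assms in auto)
  ultimately show ?thesis using assms unfolding scaled_inner_def by simp
qed

lemma scaled_inner_weight_delta:
  assumes "1 \<le> k" "k \<le> L" "m \<in> {1..ls k}" "j \<in> {1..ls (k - 1)}"
  shows "scaled_inner ls L \<theta> (\<lambda>p. if p = weight_idx ls k m j then y else 0) = \<theta> (weight_idx ls k m j) * y"
proof -
  have bias_ne: "bias_idx ls k' i \<noteq> weight_idx ls k m j" if "1 \<le> k'" "i \<in> {1..ls k'}" for k' i
    using weight_idx_neq_bias_idx[of k k' m ls j i] assms that by auto
  have "(\<Sum>i = 1..ls k'. \<Sum>j' = 1..ls (k' - 1).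
          \<theta> (weight_idx ls k' i j') * (if weight_idx ls k' i j' = weight_idx ls k m j then y else 0))
      = (if k' = k then \<theta> (weight_idx ls k m j) * y else 0)" if "k' \<in> {1..L}" for k'
  proof -
    have "(\<Sum>i = 1..ls k'. \<Sum>j' = 1..ls (k' - 1).
            \<theta> (weight_idx ls k' i j') * (if weight_idx ls k' i j' = weight_idx ls k m j then y else 0))
        = (\<Sum>i = 1..ls k'. if k' = k \<and> i = m then \<theta> (weight_idx ls k m j) * y else 0)"
    proof (rule sum.cong[OF refl])
      fix i assume "i \<in> {1..ls k'}"
      then have "(\<Sum>j' = 1..ls (k' - 1).
            \<theta> (weight_idx ls k' i j') * (if weight_idx ls k' i j' = weight_idx ls k m j then y else 0))
          = (\<Sum>j' = 1..ls (k' - 1). if k' = k \<and> i = m \<and> j' = j then \<theta> (weight_idx ls k m j) * y else 0)"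
        by (intro sum.cong[OF refl]) (use weight_idx_eq_iff[of k' k i ls _ m j] assms that in auto)
      also have "\<dots> = (if k' = k \<and> i = m then \<theta> (weight_idx ls k m j) * y else 0)"
        using assms by (cases "k' = k \<and> i = m") auto
      finally show "(\<Sum>j' = 1..ls (k' - 1).
            \<theta> (weight_idx ls k' i j') * (if weight_idx ls k' i j' = weight_idx ls k m j then y else 0))
          = (if k' = k \<and> i = m then \<theta> (weight_idx ls k m j) * y else 0)" .
    qed
    also have "\<dots> = (if k' = k then \<theta> (weight_idx ls k m j) * y else 0)" using assms by (cases "k' = k") auto
    finally show ?thesis .
  qed
  then have "(\<Sum>k' = 1..L. \<Sum>i = 1..ls k'. \<Sum>j' = 1..ls (k' - 1).
          \<theta> (weight_idx ls k' i j') * (if weight_idx ls k' i j' = weight_idx ls k m j then y else 0))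
      = (\<Sum>k' = 1..L. if k' = k then \<theta> (weight_idx ls k m j) * y else 0)"
    by (intro sum.cong) auto
  moreover have "(\<Sum>k' = 1..L. real k' * (\<Sum>i = 1..ls k'.
      \<theta> (bias_idx ls k' i) * (if bias_idx ls k' i = weight_idx ls k m j then y else 0))) = 0"
    using bias_ne by (auto intro!: sum.neutral)
  ultimately show ?thesis using assms unfolding scaled_inner_def by simp
qed

lemma scaled_inner_aff_pderiv:
  assumes "1 \<le> k" "k \<le> L" "m \<in> {1..ls k}"
  shows "scaled_inner ls L \<theta> (\<lambda>p. aff_pderiv ls \<theta> k p y (dy p) m)
    = real k * bs ls \<theta> k m + (\<Sum>j = 1..ls (k - 1). wt ls \<theta> k m j * y j)
      + (\<Sum>j = 1..ls (k - 1). wt ls \<theta> k m j * scaled_inner ls L \<theta> (\<lambda>p. dy p j))"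
proof -
  have "scaled_inner ls L \<theta> (\<lambda>p. aff_pderiv ls \<theta> k p y (dy p) m)
      = scaled_inner ls L \<theta> (\<lambda>p. if p = bias_idx ls k m then 1 else 0)
        + (\<Sum>j = 1..ls (k - 1). scaled_inner ls L \<theta> (\<lambda>p. if p = weight_idx ls k m j then y j else 0))
        + (\<Sum>j = 1..ls (k - 1). wt ls \<theta> k m j * scaled_inner ls L \<theta> (\<lambda>p. dy p j))"
    by (simp only: aff_pderiv_def scaled_inner_add scaled_inner_sum finite_atLeastAtMost scaled_inner_mult)
  also have "\<dots> = real k * bs ls \<theta> k m + (\<Sum>j = 1..ls (k - 1). wt ls \<theta> k m j * y j)
      + (\<Sum>j = 1..ls (k - 1). wt ls \<theta> k m j * scaled_inner ls L \<theta> (\<lambda>p. dy p j))"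
    using assms by (simp add: scaled_inner_bias_delta scaled_inner_weight_delta bs_eq_bias_idx wt_eq_weight_idx)
  finally show ?thesis .
qed

lemma netw_pderiv_beyond:
  "dd ls k < p \<Longrightarrow> j \<in> {1..ls k} \<Longrightarrow> netw_pderiv act dact ls \<theta> p k x j = 0"
proof (induction k arbitrary: j)
  case (Suc k)
  have "p \<noteq> bias_idx ls (Suc k) j" using bias_idx_bounds[of "Suc k" j ls] Suc.prems by auto
  moreover have "p \<noteq> weight_idx ls (Suc k) j j'" if "j' \<in> {1..ls k}" for j'
    using weight_idx_bounds[of j ls "Suc k" j'] bias_idx_bounds[of "Suc k" j ls] Suc.prems that by auto
  moreover have "netw_pderiv act dact ls \<theta> p k x j' = 0" if "j' \<in> {1..ls k}" for j'
    using Suc.IH[OF _ that] Suc.prems dd_mono[of k "Suc k" ls] by simp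
  ultimately show ?case by (simp add: aff_pderiv_def)
qed simp

lemma netw_pderiv_last_bias:
  assumes "1 \<le> L" "i \<in> {1..ls L}" "m \<in> {1..ls L}"
  shows "netw_pderiv act dact ls \<theta> (bias_idx ls L i) L x m = (if i = m then 1 else 0)"
proof -
  obtain L' where L': "L = Suc L'" using assms(1) by (cases L) auto
  have "bias_idx ls L i = bias_idx ls L m \<longleftrightarrow> i = m" using bias_idx_eq_iff[of L L i ls m] assms by auto
  moreover have "bias_idx ls L i \<noteq> weight_idx ls L m j" if "j \<in> {1..ls L'}" for j
    using weight_idx_neq_bias_idx[of L L m ls j i] assms that L' by auto
  moreover have "netw_pderiv act dact ls \<theta> (bias_idx ls L i) L' x j = 0" if "j \<in> {1..ls L'}" for j
    by (rule netw_pderiv_beyond) (use that bias_idx_bounds[of L i ls] L' assms in auto)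
  ultimately show ?thesis unfolding L' by (simp add: aff_pderiv_def)
qed

text \<open>The value at 0 is the one forced by the limit of the derivatives of the smoothed activations,
  which vanish on a neighbourhood of 0.\<close>
definition dact_inf :: "nat \<Rightarrow> real \<Rightarrow> real" where
  "dact_inf k y = (if y > 0 then 1 else 0)"

lemma relu_netw_euler:
  "k \<le> L \<Longrightarrow> m \<in> {1..ls k} \<Longrightarrow>
     scaled_inner ls L \<theta> (\<lambda>p. netw_pderiv act_inf dact_inf ls \<theta> p k x m) = real k * netw act_inf ls \<theta> k x m"
proof (induction k arbitrary: m)
  case 0 then show ?case by (simp add: scaled_inner_def)
next
  case (Suc k)
  have "scaled_inner ls L \<theta> (\<lambda>p. dact_inf k (netw act_inf ls \<theta> k x j) * netw_pderiv act_inf dact_inf ls \<theta> p k x j)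
      = real k * layer_input act_inf ls \<theta> k x j" if "j \<in> {1..ls k}" for j
  proof (cases "k = 0")
    case False
    have "scaled_inner ls L \<theta> (\<lambda>p. dact_inf k (netw act_inf ls \<theta> k x j) * netw_pderiv act_inf dact_inf ls \<theta> p k x j)
        = dact_inf k (netw act_inf ls \<theta> k x j) * (real k * netw act_inf ls \<theta> k x j)"
      using Suc.IH[of j] Suc.prems that by (simp add: scaled_inner_mult)
    \<comment> \<open>\<open>max z 0 = dact_inf k z * z\<close>, the infinitesimal form of positive homogeneity\<close>
    then show ?thesis using False by (simp add: layer_input_def act_inf_def dact_inf_def)
  qed (simp add: scaled_inner_def)
  then have "scaled_inner ls L \<theta> (\<lambda>p. netw_pderiv act_inf dact_inf ls \<theta> p (Suc k) x m)
      = real (Suc k) * bs ls \<theta> (Suc k) m + (\<Sum>j = 1..ls k. wt ls \<theta> (Suc k) m j * layer_input act_inf ls \<theta> k x j)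
        + real k * (\<Sum>j = 1..ls k. wt ls \<theta> (Suc k) m j * layer_input act_inf ls \<theta> k x j)"
    using scaled_inner_aff_pderiv[of "Suc k" L m ls \<theta>] Suc.prems
    by (simp add: sum_distrib_left mult.left_commute)
  then show ?case by (simp add: netw_Suc aff_def algebra_simps)
qed

lemma relu_sqerr_pderiv_euler:
  assumes "1 \<le> L"
  shows "scaled_inner ls L \<theta> (\<lambda>p. sqerr_pderiv act_inf dact_inf ls L f \<theta> p x)
     - real L * (\<Sum>i = 1..ls L. c i * sqerr_pderiv act_inf dact_inf ls L f \<theta> (bias_idx ls L i) x)
     = 2 * real L * (\<Sum>m = 1..ls L. (netw act_inf ls \<theta> L x m - f x m) * (netw act_inf ls \<theta> L x m - c m))"
proof -
  have "scaled_inner ls L \<theta> (\<lambda>p. sqerr_pderiv act_inf dact_inf ls L f \<theta> p x)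
      = (\<Sum>m = 1..ls L. 2 * (netw act_inf ls \<theta> L x m - f x m) * scaled_inner ls L \<theta> (\<lambda>p. netw_pderiv act_inf dact_inf ls \<theta> p L x m))"
    by (simp only: sqerr_pderiv_def scaled_inner_sum finite_atLeastAtMost scaled_inner_mult)
  also have "\<dots> = (\<Sum>m = 1..ls L. 2 * (netw act_inf ls \<theta> L x m - f x m) * (real L * netw act_inf ls \<theta> L x m))"
    by (intro sum.cong) (simp_all add: relu_netw_euler)
  finally have inner: "scaled_inner ls L \<theta> (\<lambda>p. sqerr_pderiv act_inf dact_inf ls L f \<theta> p x)
      = (\<Sum>m = 1..ls L. 2 * (netw act_inf ls \<theta> L x m - f x m) * (real L * netw act_inf ls \<theta> L x m))" .
  have "sqerr_pderiv act_inf dact_inf ls L f \<theta> (bias_idx ls L i) x = 2 * (netw act_inf ls \<theta> L x i - f x i)"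
    if "i \<in> {1..ls L}" for i
  proof -
    have "sqerr_pderiv act_inf dact_inf ls L f \<theta> (bias_idx ls L i) x
        = (\<Sum>m = 1..ls L. if i = m then 2 * (netw act_inf ls \<theta> L x m - f x m) else 0)"
      unfolding sqerr_pderiv_def by (intro sum.cong) (use netw_pderiv_last_bias[where ls = ls and L = L, OF assms that] in auto)
    then show ?thesis using that by simp
  qed
  then have "(\<Sum>i = 1..ls L. c i * sqerr_pderiv act_inf dact_inf ls L f \<theta> (bias_idx ls L i) x)
      = (\<Sum>i = 1..ls L. c i * (2 * (netw act_inf ls \<theta> L x i - f x i)))"
    by (intro sum.cong) auto
  with inner show ?thesis
    by (simp add: sum_distrib_left sum_subtractf[symmetric] algebra_simps)
qed

lemma has_bochner_integral_scaled_inner: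
  assumes "\<And>p. p \<in> {1..dd ls L} \<Longrightarrow> integrable M (g p)"
  shows "has_bochner_integral M (\<lambda>x. scaled_inner ls L \<theta> (\<lambda>p. g p x)) (scaled_inner ls L \<theta> (\<lambda>p. integral\<^sup>L M (g p)))"
  unfolding scaled_inner_def
  by (intro has_bochner_integral_add has_bochner_integral_sum has_bochner_integral_mult_right
      has_bochner_integral_integrable assms bias_idx_range weight_idx_range) auto

section \<open>The limit of the smoothed gradients\<close>

definition dact_r :: "(real \<Rightarrow> real \<Rightarrow> real) \<Rightarrow> real \<Rightarrow> nat \<Rightarrow> real \<Rightarrow> real" where
  "dact_r R r k = deriv (R (r powr (1 / real k)))"

lemma deriv_eq_0_if_vanishes_below:
  fixes g :: "real \<Rightarrow> real"
  assumes "\<And>y. y < c \<Longrightarrow> g y = 0" "z < c"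
  shows "deriv g z = 0"
proof -
  have "(g has_real_derivative 0) (at z)"
    by (rule has_field_derivative_transform_within_open[OF DERIV_const open_lessThan]) (use assms in auto)
  then show ?thesis by (rule DERIV_imp_deriv)
qed

lemma deriv_eq_1_if_identity_above:
  fixes g :: "real \<Rightarrow> real"
  assumes "\<And>y. c < y \<Longrightarrow> g y = y" "c < z"
  shows "deriv g z = 1"
proof -
  have "(g has_real_derivative 1) (at z)"
    by (rule has_field_derivative_transform_within_open[OF DERIV_ident open_greaterThan]) (use assms in auto)
  then show ?thesis by (rule DERIV_imp_deriv)
qed

lemma smoothed_relu_eq_relu:
  fixes R :: "real \<Rightarrow> real \<Rightarrow> real"
  assumes R_low: "\<forall>r\<ge>1. \<forall>x. x \<le> A / r \<longrightarrow> R r x = 0" and R_high: "\<forall>r\<ge>1. \<forall>z. z \<ge> B / r \<longrightarrow> R r z = z"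
    and "0 < A" "1 \<le> s" "0 < z \<Longrightarrow> B / s < z"
  shows "R s z = max z 0 \<and> deriv (R s) z = (if 0 < z then 1 else 0)"
proof (cases "0 < z")
  case True
  have "R s y = y" if "B / s < y" for y using R_high assms(4) that by auto
  then show ?thesis using True assms(5) deriv_eq_1_if_identity_above[of "B / s" "R s" z] by auto
next
  case False
  have "0 < A / s" using assms(3,4) by simp
  moreover have "R s y = 0" if "y < A / s" for y using R_low assms(4) that by auto
  ultimately show ?thesis using False deriv_eq_0_if_vanishes_below[of "A / s" "R s" z] by (auto simp: max_def)
qed

lemma act_r_eventually_relu:
  assumes R_low: "\<forall>r\<ge>1. \<forall>x. x \<le> A / r \<longrightarrow> R r x = 0" and R_high: "\<forall>r\<ge>1. \<forall>z. z \<ge> B / r \<longrightarrow> R r z = z"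
    and "0 < A" "1 \<le> k"
  shows "eventually (\<lambda>r. act_r R r k z = act_inf k z \<and> dact_r R r k z = dact_inf k z) at_top"
proof -
  have "eventually (\<lambda>s::real. 1 \<le> s \<and> (0 < z \<longrightarrow> B / s < z)) at_top"
    using eventually_ge_at_top[of "max 1 (B / z + 1)"]
  proof eventually_elim
    case (elim s)
    then have "1 \<le> s" "B / z < s" by auto
    moreover have "B / s < z" if "0 < z"
    proof -
      have "B < s * z" using \<open>B / z < s\<close> that by (simp add: pos_divide_less_eq)
      moreover have "0 < s" using \<open>1 \<le> s\<close> by simp
      ultimately show ?thesis by (simp add: pos_divide_less_eq mult.commute)
    qed
    ultimately show ?case by blast
  qed
  moreover have "filterlim (\<lambda>r::real. r powr (1 / real k)) at_top at_top"
    by (rule real_powr_at_top) (use assms in auto)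
  ultimately show ?thesis
    by (rule eventually_compose_filterlim[THEN eventually_mono])
      (simp add: act_r_def dact_r_def act_inf_def dact_inf_def smoothed_relu_eq_relu[OF R_low R_high \<open>0 < A\<close>])
qed

lemma aff_cong: "(\<And>j. j \<in> {1..ls (k - 1)} \<Longrightarrow> y j = y' j) \<Longrightarrow> aff ls \<theta> k y = aff ls \<theta> k y'"
  by (auto simp: aff_def fun_eq_iff intro!: sum.cong)

lemma aff_pderiv_cong:
  "(\<And>j. j \<in> {1..ls (k - 1)} \<Longrightarrow> y j = y' j \<and> dy j = dy' j)
     \<Longrightarrow> aff_pderiv ls \<theta> k p y dy = aff_pderiv ls \<theta> k p y' dy'"
  by (auto simp: aff_pderiv_def fun_eq_iff intro!: sum.cong)

lemma netw_eventually_eq: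
  assumes "\<And>k z. 1 \<le> k \<Longrightarrow> eventually (\<lambda>r. act' r k z = act k z \<and> dact' r k z = dact k z) F"
  shows "eventually (\<lambda>r. netw (act' r) ls \<theta> k x = netw act ls \<theta> k x
            \<and> netw_pderiv (act' r) (dact' r) ls \<theta> p k x = netw_pderiv act dact ls \<theta> p k x) F"
proof (induction k)
  case (Suc k)
  have "eventually (\<lambda>r. \<forall>j\<in>{1..ls k}. k \<noteq> 0 \<longrightarrow> act' r k (netw act ls \<theta> k x j) = act k (netw act ls \<theta> k x j)
      \<and> dact' r k (netw act ls \<theta> k x j) = dact k (netw act ls \<theta> k x j)) F"
    by (intro eventually_ball_finite ballI) (use assms in \<open>auto simp: eventually_mono\<close>)
  with Suc.IH show ?case
  proof eventually_elim
    case (elim r)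
    then have "layer_input (act' r) ls \<theta> k x j = layer_input act ls \<theta> k x j
        \<and> dact' r k (netw (act' r) ls \<theta> k x j) * netw_pderiv (act' r) (dact' r) ls \<theta> p k x j
          = dact k (netw act ls \<theta> k x j) * netw_pderiv act dact ls \<theta> p k x j" if "j \<in> {1..ls k}" for j
      using that by (cases "k = 0") (auto simp: layer_input_def)
    then show ?case
      unfolding netw_Suc netw_pderiv.simps by (intro conjI aff_cong aff_pderiv_cong) auto
  qed
qed simp

lemma netw_zero_params: "1 \<le> L \<Longrightarrow> netw act ls (\<lambda>_. 0) L x = (\<lambda>_. 0)"
  by (cases L) (auto simp: netw_Suc aff_def bs_eq_bias_idx wt_eq_weight_idx)

lemma abs_le_one_plus_square: "\<bar>y :: real\<bar> \<le> 1 + y\<^sup>2"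
proof -
  have "0 \<le> (\<bar>y\<bar> - 1)\<^sup>2" by simp
  then have "2 * \<bar>y\<bar> \<le> 1 + y\<^sup>2" by (simp add: power2_eq_square algebra_simps abs_mult_self_eq)
  then show ?thesis using abs_ge_zero[of y] by linarith
qed

locale smoothed_relu_risk = finite_measure \<mu>
  for \<mu> :: "(nat \<Rightarrow> real) measure" +
  fixes L :: nat and ls :: "nat \<Rightarrow> nat" and a b \<A> \<B> :: real
    and R :: "real \<Rightarrow> real \<Rightarrow> real" and f :: "(nat \<Rightarrow> real) \<Rightarrow> nat \<Rightarrow> real"
  assumes L_pos: "1 \<le> L"
    and A_pos: "0 < \<A>"
    and R_deriv: "\<And>r x. 1 \<le> r \<Longrightarrow> (R r has_real_derivative deriv (R r) x) (at x)"
    and R_deriv_bdd: "\<exists>C. \<forall>r\<ge>1. \<forall>x. \<bar>deriv (R r) x\<bar> \<le> C"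
    and R_abs_le: "\<And>r y. 1 \<le> r \<Longrightarrow> \<bar>R r y\<bar> \<le> \<bar>y\<bar>"
    and R_low: "\<forall>r\<ge>1. \<forall>x. x \<le> \<A> / r \<longrightarrow> R r x = 0"
    and R_high: "\<forall>r\<ge>1. \<forall>z. z \<ge> \<B> / r \<longrightarrow> R r z = z"
    and space_subset_cube: "space \<mu> \<subseteq> cube (ls 0) a b"
    and sqerr_integrable: "\<And>r \<phi>. 1 \<le> r \<Longrightarrow> integrable \<mu> (sqerr (act_r R r) ls L f \<phi>)"
begin

lemma act_r_has_real_derivative: "1 \<le> r \<Longrightarrow> (act_r R r k has_real_derivative dact_r R r k y) (at y)"
  unfolding act_r_def dact_r_def by (intro R_deriv ge_one_powr_ge_zero) auto

lemma abs_act_r_le: "1 \<le> r \<Longrightarrow> \<bar>act_r R r k y\<bar> \<le> \<bar>y\<bar>"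
  unfolding act_r_def by (intro R_abs_le ge_one_powr_ge_zero) auto

lemma dact_r_bounded:
  obtains C where "0 \<le> C" "\<And>r k y. 1 \<le> r \<Longrightarrow> \<bar>dact_r R r k y\<bar> \<le> C"
proof -
  obtain C where C: "\<forall>r\<ge>1. \<forall>x. \<bar>deriv (R r) x\<bar> \<le> C" using R_deriv_bdd by blast
  show ?thesis
  proof (rule that[of "max C 0"])
    fix r :: real and k y assume "1 \<le> r"
    then have "1 \<le> r powr (1 / real k)" by (intro ge_one_powr_ge_zero) auto
    then show "\<bar>dact_r R r k y\<bar> \<le> max C 0"
      using C by (auto simp: dact_r_def intro: order_trans[OF _ max.cobounded1])
  qed simp
qed

lemma target_sq_integrable: "integrable \<mu> (\<lambda>x. \<Sum>m = 1..ls L. (f x m)\<^sup>2)"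
proof -
  have "sqerr (act_r R 1) ls L f (\<lambda>_. 0) = (\<lambda>x. \<Sum>m = 1..ls L. (f x m)\<^sup>2)"
    by (simp add: fun_eq_iff sqerr_def netw_zero_params[OF L_pos])
  then show ?thesis using sqerr_integrable[of 1 "\<lambda>_. 0"] by simp
qed

lemma abs_input_le:
  assumes "x \<in> space \<mu>" "j \<in> {1..ls 0}"
  shows "\<bar>x j\<bar> \<le> \<bar>a\<bar> + \<bar>b\<bar>"
proof -
  from subsetD[OF space_subset_cube assms(1)] assms(2) have "a \<le> x j" "x j \<le> b"
    by (auto simp: cube_def PiE_iff)
  then show ?thesis
    unfolding abs_le_iff using abs_ge_self[of b] abs_ge_minus_self[of a] abs_ge_zero[of a] abs_ge_zero[of b] by auto
qed

lemma abs_target_le: "m \<in> {1..ls L} \<Longrightarrow> \<bar>f x m\<bar> \<le> 1 + (\<Sum>m = 1..ls L. (f x m)\<^sup>2)"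
  using abs_le_one_plus_square[of "f x m"] member_le_sum[of m "{1..ls L}" "\<lambda>m. (f x m)\<^sup>2"] by simp

lemma sqerr_pderiv_act_r_dominated:
  assumes "0 \<le> T"
  obtains W where "integrable \<mu> W"
    and "\<And>r \<theta> p x. 1 \<le> r \<Longrightarrow> \<forall>q\<in>{1..dd ls L}. \<bar>\<theta> q\<bar> \<le> T \<Longrightarrow> x \<in> space \<mu> \<Longrightarrow>
           \<bar>sqerr_pderiv (act_r R r) (dact_r R r) ls L f \<theta> p x\<bar> \<le> W x"
proof -
  obtain C where C: "0 \<le> C" "\<And>r k y. 1 \<le> r \<Longrightarrow> \<bar>dact_r R r k y\<bar> \<le> C" by (rule dact_r_bounded) (rule that)
  define X where "X = \<bar>a\<bar> + \<bar>b\<bar>"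
  define W where "W x = real (ls L) * (2 * (netw_bound ls T X L + (1 + (\<Sum>m = 1..ls L. (f x m)\<^sup>2)))
    * pderiv_bound ls T X C L)" for x
  have "integrable \<mu> W"
    unfolding W_def using target_sq_integrable by (intro integrable_mult_left integrable_mult_right) auto
  moreover have "\<bar>sqerr_pderiv (act_r R r) (dact_r R r) ls L f \<theta> p x\<bar> \<le> W x"
    if "1 \<le> r" "\<forall>q\<in>{1..dd ls L}. \<bar>\<theta> q\<bar> \<le> T" "x \<in> space \<mu>" for r \<theta> p x
    unfolding W_def X_def
    by (intro abs_sqerr_pderiv_le assms C(1) that(2) ballI allI abs_input_le[OF that(3)] abs_act_r_le[OF that(1)]
        C(2)[OF that(1)] abs_target_le)
  ultimately show ?thesis by (rule that)
qed

lemma grad_risk_eq_integral: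
  assumes r: "1 \<le> r" and p: "p \<in> {1..dd ls L}"
  shows "integrable \<mu> (sqerr_pderiv (act_r R r) (dact_r R r) ls L f \<theta> p)
    \<and> grad_risk R ls L \<mu> f r \<theta> p = integral\<^sup>L \<mu> (sqerr_pderiv (act_r R r) (dact_r R r) ls L f \<theta> p)"
proof -
  define T where "T = (\<Sum>q = 1..dd ls L. \<bar>\<theta> q\<bar>) + 1"
  have "0 \<le> T" by (simp add: T_def sum_nonneg)
  then obtain W where W: "integrable \<mu> W"
    "\<And>r \<theta> p x. 1 \<le> r \<Longrightarrow> \<forall>q\<in>{1..dd ls L}. \<bar>\<theta> q\<bar> \<le> T \<Longrightarrow> x \<in> space \<mu> \<Longrightarrow>
       \<bar>sqerr_pderiv (act_r R r) (dact_r R r) ls L f \<theta> p x\<bar> \<le> W x"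
    by (rule sqerr_pderiv_act_r_dominated) (rule that)
  have \<theta>_le: "\<bar>\<theta> q\<bar> \<le> T - 1" if "q \<in> {1..dd ls L}" for q
    using member_le_sum[of q "{1..dd ls L}" "\<lambda>q. \<bar>\<theta> q\<bar>"] that by (simp add: T_def)
  have near: "\<forall>q\<in>{1..dd ls L}. \<bar>(\<theta>(p := t)) q\<bar> \<le> T" if "\<bar>t - \<theta> p\<bar> < 1" for t
    using \<theta>_le \<theta>_le[OF p] abs_triangle_ineq[of "\<theta> p" "t - \<theta> p"] that by force
  have "integrable \<mu> (sqerr_pderiv (act_r R r) (dact_r R r) ls L f (\<theta>(p := \<theta> p)) p)
    \<and> ((\<lambda>t. integral\<^sup>L \<mu> (sqerr (act_r R r) ls L f (\<theta>(p := t)))) has_real_derivative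
         integral\<^sup>L \<mu> (sqerr_pderiv (act_r R r) (dact_r R r) ls L f (\<theta>(p := \<theta> p)) p)) (at (\<theta> p))"
  proof (rule has_real_derivative_integral_dominated[where \<delta> = 1 and h = W])
    show "((\<lambda>s. sqerr (act_r R r) ls L f (\<theta>(p := s)) x) has_real_derivative
        sqerr_pderiv (act_r R r) (dact_r R r) ls L f (\<theta>(p := t)) p x) (at t)" for x t
      using has_real_derivative_sqerr[OF act_r_has_real_derivative[OF r], where \<theta> = "\<theta>(p := t)" and p = p] by simp
  qed (use W r near sqerr_integrable[OF r] in auto)
  then show ?thesis
    using p by (auto simp: grad_risk_def risk_def intro: DERIV_imp_deriv)
qed

lemma sqerr_pderiv_eventually_relu:
  "eventually (\<lambda>r. sqerr_pderiv (act_r R r) (dact_r R r) ls L f \<theta> p x = sqerr_pderiv act_inf dact_inf ls L f \<theta> p x) at_top"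
proof -
  have "eventually (\<lambda>r. act_r R r k z = act_inf k z \<and> dact_r R r k z = dact_inf k z) at_top" if "1 \<le> k" for k z
    using act_r_eventually_relu[OF R_low R_high A_pos that] .
  from netw_eventually_eq[where act' = "act_r R" and dact' = "dact_r R" and act = act_inf and dact = dact_inf
      and ls = ls and \<theta> = \<theta> and k = L and p = p and x = x, OF this]
  show ?thesis by (rule eventually_mono) (auto simp: sqerr_pderiv_def)
qed

lemma grad_risk_tendsto:
  assumes p: "p \<in> {1..dd ls L}"
  shows "integrable \<mu> (sqerr_pderiv act_inf dact_inf ls L f \<theta> p)
    \<and> ((\<lambda>r. grad_risk R ls L \<mu> f r \<theta> p) \<longlongrightarrow> integral\<^sup>L \<mu> (sqerr_pderiv act_inf dact_inf ls L f \<theta> p)) at_top"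
proof -
  define g where "g r = sqerr_pderiv (act_r R (max r 1)) (dact_r R (max r 1)) ls L f \<theta> p" for r
  define g_inf where "g_inf = sqerr_pderiv act_inf dact_inf ls L f \<theta> p"
  have g_meas: "g r \<in> borel_measurable \<mu>" for r
    using grad_risk_eq_integral[of "max r 1" p \<theta>] p by (auto simp: g_def)
  have g_ev: "eventually (\<lambda>r. g r x = g_inf x) at_top" for x
    using sqerr_pderiv_eventually_relu[of \<theta> p x] eventually_ge_at_top[of "1::real"]
    by eventually_elim (simp add: g_def g_inf_def)
  have g_inf_meas: "g_inf \<in> borel_measurable \<mu>"
    using filterlim_iff[THEN iffD1, OF filterlim_real_sequentially] g_ev
    by (intro borel_measurable_LIMSEQ_real[where u = "\<lambda>n. g (real n)", OF tendsto_eventually g_meas]) blast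
  have "0 \<le> (\<Sum>q = 1..dd ls L. \<bar>\<theta> q\<bar>)" by (simp add: sum_nonneg)
  then obtain W where W: "integrable \<mu> W"
    "\<And>r \<theta>' p x. 1 \<le> r \<Longrightarrow> \<forall>q\<in>{1..dd ls L}. \<bar>\<theta>' q\<bar> \<le> (\<Sum>q = 1..dd ls L. \<bar>\<theta> q\<bar>) \<Longrightarrow>
       x \<in> space \<mu> \<Longrightarrow> \<bar>sqerr_pderiv (act_r R r) (dact_r R r) ls L f \<theta>' p x\<bar> \<le> W x"
    by (rule sqerr_pderiv_act_r_dominated) (rule that)
  have g_bound: "\<forall>\<^sub>F r in at_top. AE x in \<mu>. norm (g r x) \<le> W x"
    unfolding g_def real_norm_def
    by (intro always_eventually allI AE_I2 W(2)) (auto intro: member_le_sum)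
  have g_lim: "AE x in \<mu>. ((\<lambda>r. g r x) \<longlongrightarrow> g_inf x) at_top"
    by (intro AE_I2 tendsto_eventually g_ev)
  have "eventually (\<lambda>r. integral\<^sup>L \<mu> (g r) = grad_risk R ls L \<mu> f r \<theta> p) at_top"
    using eventually_ge_at_top[of "1::real"]
    by eventually_elim (use grad_risk_eq_integral p in \<open>simp add: g_def\<close>)
  with integral_dominated_convergence_at_top[OF g_inf_meas g_meas W(1) g_lim g_bound]
  have "((\<lambda>r. grad_risk R ls L \<mu> f r \<theta> p) \<longlongrightarrow> integral\<^sup>L \<mu> g_inf) at_top"
    by (rule Lim_transform_eventually)
  moreover have "integrable \<mu> g_inf"
    by (rule integrable_dominated_convergence_at_top[OF g_inf_meas g_meas W(1) g_lim g_bound])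
  ultimately show ?thesis by (simp add: g_inf_def)
qed

lemma scaled_inner_grad_limit:
  assumes "\<forall>p\<in>{1..dd ls L}. ((\<lambda>r. grad_risk R ls L \<mu> f r \<theta> p) \<longlongrightarrow> G p) at_top"
  shows "scaled_inner ls L \<theta> G - real L * (\<Sum>i = 1..ls L. c i * G (bias_idx ls L i))
    = 2 * real L * (\<integral>x. (\<Sum>m = 1..ls L. (netw act_inf ls \<theta> L x m - f x m) * (netw act_inf ls \<theta> L x m - c m)) \<partial>\<mu>)"
proof -
  let ?g = "\<lambda>p. sqerr_pderiv act_inf dact_inf ls L f \<theta> p"
  have G: "G p = integral\<^sup>L \<mu> (?g p) \<and> integrable \<mu> (?g p)" if "p \<in> {1..dd ls L}" for p
  proof -
    from assms that have "((\<lambda>r. grad_risk R ls L \<mu> f r \<theta> p) \<longlongrightarrow> G p) at_top" by blast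
    with grad_risk_tendsto[OF that] show ?thesis
      using tendsto_unique[OF trivial_limit_at_top_linorder] by blast
  qed
  have last_bias: "bias_idx ls L i \<in> {1..dd ls L}" if "i \<in> {1..ls L}" for i
    using bias_idx_range[where ls = ls, OF L_pos order.refl that] .
  have "scaled_inner ls L \<theta> G - real L * (\<Sum>i = 1..ls L. c i * G (bias_idx ls L i))
      = scaled_inner ls L \<theta> (\<lambda>p. integral\<^sup>L \<mu> (?g p))
        - real L * (\<Sum>i = 1..ls L. c i * integral\<^sup>L \<mu> (?g (bias_idx ls L i)))"
  proof -
    have "scaled_inner ls L \<theta> G = scaled_inner ls L \<theta> (\<lambda>p. integral\<^sup>L \<mu> (?g p))"
      by (rule scaled_inner_cong) (simp add: G)
    moreover have "(\<Sum>i = 1..ls L. c i * G (bias_idx ls L i)) = (\<Sum>i = 1..ls L. c i * integral\<^sup>L \<mu> (?g (bias_idx ls L i)))"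
      using G[OF last_bias] by (intro sum.cong refl) simp
    ultimately show ?thesis by (simp only:)
  qed
  also have "\<dots> = (\<integral>x. scaled_inner ls L \<theta> (\<lambda>p. ?g p x) - real L * (\<Sum>i = 1..ls L. c i * ?g (bias_idx ls L i) x) \<partial>\<mu>)"
  proof (intro has_bochner_integral_integral_eq[symmetric] has_bochner_integral_diff has_bochner_integral_mult_right
      has_bochner_integral_sum)
    show "has_bochner_integral \<mu> (\<lambda>x. scaled_inner ls L \<theta> (\<lambda>p. ?g p x)) (scaled_inner ls L \<theta> (\<lambda>p. integral\<^sup>L \<mu> (?g p)))"
      by (rule has_bochner_integral_scaled_inner) (simp add: G)
    show "has_bochner_integral \<mu> (?g (bias_idx ls L i)) (integral\<^sup>L \<mu> (?g (bias_idx ls L i)))"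
      if "i \<in> {1..ls L}" for i
      using G[OF last_bias[OF that]] by (simp add: has_bochner_integral_integrable)
  qed
  also have "\<dots> = (\<integral>x. 2 * real L * (\<Sum>m = 1..ls L. (netw act_inf ls \<theta> L x m - f x m) * (netw act_inf ls \<theta> L x m - c m)) \<partial>\<mu>)"
    by (simp only: relu_sqerr_pderiv_euler[OF L_pos])
  finally show ?thesis by simp
qed

end

theorem lemma4p1:
  fixes L :: nat and ls :: "nat \<Rightarrow> nat" and a b \<A> \<B> :: real
    and R :: "real \<Rightarrow> real \<Rightarrow> real"
    and \<mu> :: "(nat \<Rightarrow> real) measure"
    and f :: "(nat \<Rightarrow> real) \<Rightarrow> nat \<Rightarrow> real"
    and G :: "(nat \<Rightarrow> real) \<Rightarrow> nat \<Rightarrow> real"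
    and \<gamma> :: real and \<theta> :: "nat \<Rightarrow> real"
  assumes L_pos: "L \<ge> 1"
    and ls_pos: "\<forall>k. ls k \<ge> 1"
    and ab: "a < b"
    and AB: "0 < \<A>" "\<A> < \<B>"
    and R_C1: "\<forall>r\<ge>1. \<exists>R'. continuous_on UNIV R' \<and> (\<forall>x. (R r has_real_derivative R' x) (at x))"
    and R_low: "\<forall>r\<ge>1. \<forall>x. x \<le> \<A> / r \<longrightarrow> R r x = 0"
    and R_bnd: "\<forall>r\<ge>1. \<forall>y. 0 \<le> R r y \<and> R r y \<le> max y 0"
    and R_high: "\<forall>r\<ge>1. \<forall>z. z \<ge> \<B> / r \<longrightarrow> R r z = z"
    and R_deriv_bdd: "\<exists>C. \<forall>r\<ge>1. \<forall>x. \<bar>deriv (R r) x\<bar> \<le> C"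
    and mu_sets: "sets \<mu> = sets (restrict_space (Pi\<^sub>M {1..ls 0} (\<lambda>_. borel)) (cube (ls 0) a b))"
    and mu_fin: "emeasure \<mu> (space \<mu>) \<noteq> \<infinity>"
    and f_meas: "\<forall>i \<in> {1..ls L}. (\<lambda>x. f x i) \<in> borel_measurable \<mu>"
    and int_r: "\<forall>r\<ge>1. \<forall>\<phi>. integrable \<mu> (sqerr (act_r R r) ls L f \<phi>)"
    and int_inf: "\<forall>\<phi>. integrable \<mu> (sqerr act_inf ls L f \<phi>)"
    and G_def: "\<forall>\<phi>. (\<forall>i \<in> {1..dd ls L}. \<exists>l. ((\<lambda>r. grad_risk R ls L \<mu> f r \<phi> i) \<longlongrightarrow> l) at_top)
                   \<longrightarrow> (\<forall>i \<in> {1..dd ls L}. ((\<lambda>r. grad_risk R ls L \<mu> f r \<phi> i) \<longlongrightarrow> G \<phi> i) at_top)"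
  defines "f0 \<equiv> f (zvec (ls 0))"
    and "I \<equiv> integral\<^sup>L \<mu> (\<lambda>x. \<Sum>i = 1..ls L.
                (netw act_inf ls \<theta> L x i - f x i) * (netw act_inf ls \<theta> L x i - f (zvec (ls 0)) i))"
    and "nG \<equiv> (\<Sum>i = 1..dd ls L. (G \<theta> i)\<^sup>2)"
  shows "Vfun ls L f0 (\<lambda>i. \<theta> i - \<gamma> * G \<theta> i) - Vfun ls L f0 \<theta>
           = \<gamma>\<^sup>2 * nG
             + \<gamma>\<^sup>2 * (\<Sum>k = 1..L. \<Sum>i = 1..ls k.
                  (real k - 1) * (G \<theta> (ls k * ls (k - 1) + i + dd ls (k - 1)))\<^sup>2)
             - 4 * \<gamma> * real L * I
       \<and> Vfun ls L f0 (\<lambda>i. \<theta> i - \<gamma> * G \<theta> i) - Vfun ls L f0 \<theta>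
           \<le> \<gamma>\<^sup>2 * real L * nG - 4 * \<gamma> * real L * I"
proof -
  interpret smoothed_relu_risk \<mu> L ls a b \<A> \<B> R f
  proof (intro smoothed_relu_risk.intro smoothed_relu_risk_axioms.intro finite_measureI mu_fin)
    show "(R r has_real_derivative deriv (R r) x) (at x)" if "1 \<le> r" for r x
      using R_C1 that DERIV_imp_deriv by metis
    show "\<bar>R r y\<bar> \<le> \<bar>y\<bar>" if "1 \<le> r" for r y
    proof -
      have "0 \<le> R r y \<and> R r y \<le> max y 0" using R_bnd that by blast
      then show ?thesis by (auto simp: max_def split: if_splits)
    qed
    show "space \<mu> \<subseteq> cube (ls 0) a b"
      using sets_eq_imp_space_eq[OF mu_sets] by (simp add: space_restrict_space)
  qed (use L_pos AB R_deriv_bdd R_low R_high int_r in auto)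
  have "\<forall>p\<in>{1..dd ls L}. ((\<lambda>r. grad_risk R ls L \<mu> f r \<theta> p) \<longlongrightarrow> G \<theta> p) at_top"
    using G_def grad_risk_tendsto by blast
  then have euler: "scaled_inner ls L \<theta> (G \<theta>) - real L * (\<Sum>i = 1..ls L. f0 i * G \<theta> (bias_idx ls L i)) = 2 * real L * I"
    unfolding I_def f0_def by (rule scaled_inner_grad_limit)
  let ?S = "\<Sum>k = 1..L. \<Sum>i = 1..ls k. (real k - 1) * (G \<theta> (bias_idx ls k i))\<^sup>2"
  have step: "Vfun ls L f0 (\<lambda>i. \<theta> i - \<gamma> * G \<theta> i) - Vfun ls L f0 \<theta> = \<gamma>\<^sup>2 * nG + \<gamma>\<^sup>2 * ?S - 4 * \<gamma> * real L * I"
    unfolding Vfun_gradient_step euler nG_def by simp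
  have "\<gamma>\<^sup>2 * ?S \<le> \<gamma>\<^sup>2 * ((real L - 1) * nG)"
    unfolding nG_def by (intro mult_left_mono bias_weighted_sum_le) simp
  with step show ?thesis unfolding bias_idx_def by (simp add: algebra_simps)
qed

end
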